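(* A linear $[n,k]$ MDS code $\mathcal C$ over $F$ is $2$-MDS if and only if, for every integer $w$ with $\max\{0,n-2k\}\le w\le n-k-3$ and every set $X\subseteq\{1,\dots,n\}$ of size $w$, the linear $[n-w,k]$ code obtained by puncturing $\mathcal C$ on $X$ is lightly-$2$-MDS.
   Context: $F=\mathrm{GF}(q)$; $\mathsf w(\cdot)$ is Hamming weight. A linear $[n,k]$ code is $2$-MDS if there do not exist three distinct vectors $e_0,e_1,e_2\in F^n$ in the same coset of the code with $\mathsf w(e_0)+\mathsf w(e_1)+\mathsf w(e_2)\le 2(n-k)$. The puncturing of $\mathcal C$ on $X$ is $\{(c_j)_{j\notin X}: c\in\mathcal C\}$. A linear $[n',k',d']$ code $\mathcal C'$ is lightly-$2$-MDS if there do not exist three nonzero vectors $e_0,e_1,e_2\in F^{n'}$, each of Hamming weight at most $d'-1$, in the same coset of $\mathcal C'$, with pairwise disjoint supports and $\mathsf w(e_0)+\mathsf w(e_1)+\mathsf w(e_2)\le 2(n'-k')$. *)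

theory Defs
  imports Main "HOL.Vector_Spaces" "HOL-Library.Function_Algebras"
begin

text \<open>Vectors over a finite field F are functions nat => F, supported on a finite
  index set I (the coordinate positions). F^n corresponds to I = {0..<n}.\<close>

definition scl :: "'a::field \<Rightarrow> (nat \<Rightarrow> 'a) \<Rightarrow> (nat \<Rightarrow> 'a)" where
  "scl c v = (\<lambda>i. c * v i)"

definition vecs :: "nat set \<Rightarrow> (nat \<Rightarrow> 'a::zero) set" where
  "vecs I = {v. \<forall>i. i \<notin> I \<longrightarrow> v i = 0}"

definition supp :: "(nat \<Rightarrow> 'a::zero) \<Rightarrow> nat set" where
  "supp v = {i. v i \<noteq> 0}"

definition wt :: "(nat \<Rightarrow> 'a::zero) \<Rightarrow> nat" where
  "wt v = card (supp v)"

definition lin_code :: "nat set \<Rightarrow> (nat \<Rightarrow> 'a::field) set \<Rightarrow> bool" where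
  "lin_code I C \<longleftrightarrow> finite I \<and> C \<subseteq> vecs I \<and> module.subspace scl C"

definition code_dim :: "(nat \<Rightarrow> 'a::field) set \<Rightarrow> nat" where
  "code_dim C = vector_space.dim scl C"

text \<open>minimum distance; convention: the zero code has minimum distance |I|+1\<close>
definition min_dist :: "nat set \<Rightarrow> (nat \<Rightarrow> 'a::field) set \<Rightarrow> nat" where
  "min_dist I C = (if C \<subseteq> {0} then card I + 1 else Min {wt c | c. c \<in> C \<and> c \<noteq> 0})"

definition is_MDS :: "nat set \<Rightarrow> (nat \<Rightarrow> 'a::field) set \<Rightarrow> bool" where
  "is_MDS I C \<longleftrightarrow> lin_code I C \<and> min_dist I C = card I - code_dim C + 1"

definition two_MDS :: "nat set \<Rightarrow> (nat \<Rightarrow> 'a::field) set \<Rightarrow> bool" where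
  "two_MDS I C \<longleftrightarrow> \<not> (\<exists>e0 e1 e2. e0 \<in> vecs I \<and> e1 \<in> vecs I \<and> e2 \<in> vecs I \<and>
       e0 \<noteq> e1 \<and> e0 \<noteq> e2 \<and> e1 \<noteq> e2 \<and>
       e0 - e1 \<in> C \<and> e0 - e2 \<in> C \<and> e1 - e2 \<in> C \<and>
       wt e0 + wt e1 + wt e2 \<le> 2 * (card I - code_dim C))"

definition lightly_two_MDS :: "nat set \<Rightarrow> (nat \<Rightarrow> 'a::field) set \<Rightarrow> bool" where
  "lightly_two_MDS I C \<longleftrightarrow> \<not> (\<exists>e0 e1 e2. e0 \<in> vecs I \<and> e1 \<in> vecs I \<and> e2 \<in> vecs I \<and>
       e0 \<noteq> 0 \<and> e1 \<noteq> 0 \<and> e2 \<noteq> 0 \<and>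
       wt e0 + 1 \<le> min_dist I C \<and> wt e1 + 1 \<le> min_dist I C \<and> wt e2 + 1 \<le> min_dist I C \<and>
       e0 - e1 \<in> C \<and> e0 - e2 \<in> C \<and> e1 - e2 \<in> C \<and>
       supp e0 \<inter> supp e1 = {} \<and> supp e0 \<inter> supp e2 = {} \<and> supp e1 \<inter> supp e2 = {} \<and>
       wt e0 + wt e1 + wt e2 \<le> 2 * (card I - code_dim C))"

definition puncture :: "nat set \<Rightarrow> nat set \<Rightarrow> (nat \<Rightarrow> 'a::zero) set \<Rightarrow> (nat \<Rightarrow> 'a) set" where
  "puncture I X C = (\<lambda>c i. if i \<in> I - X then c i else 0) ` C"

end

theory Submission
  imports Defs
begin

text \<open>Write d = n - k + 1 for the minimum distance. Puncturing on a set X of at most n - k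
  coordinates is injective on the code, so the punctured code still has dimension k, and its
  minimum distance drops by at most |X|.

  If the punctured code contains a light triple with disjoint supports, lift it to the original
  coset: keep the first vector, and lift the other two through codewords; each lift gains at most
  |X| in weight, so the total stays within 2(n - k) and contradicts 2-MDS.

  Conversely, take a triple violating 2-MDS and count, coordinate by coordinate, how many of the
  three vectors are nonzero there. Let t2 coordinates carry at least two nonzero entries and t1
  exactly one. Each pairwise difference is a nonzero codeword, hence of weight at least d, which
  gives 3d \<le> 3 t2 + 2 t1, while the weight bound gives 2 t2 + t1 \<le> 2(n - k). Puncturing all
  t2 overlap coordinates, plus enough single ones to bring |X| up to n - 2k, separates the
  supports and yields a triple violating lightly-2-MDS for a puncturing with |X| in the range of
  the theorem.\<close>

interpretation VS: vector_space "scl :: 'a::field \<Rightarrow> (nat \<Rightarrow> 'a) \<Rightarrow> _"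
  by unfold_locales (auto simp: scl_def fun_eq_iff algebra_simps)

definition puncture_vec :: "nat set \<Rightarrow> nat set \<Rightarrow> (nat \<Rightarrow> 'a::zero) \<Rightarrow> nat \<Rightarrow> 'a" where
  "puncture_vec I X c = (\<lambda>i. if i \<in> I - X then c i else 0)"

lemma puncture_eq_image: "puncture I X C = puncture_vec I X ` C"
  unfolding puncture_def puncture_vec_def by simp

lemma puncture_vec_diff:
  "puncture_vec I X (x - y) = puncture_vec I X x - puncture_vec I X (y :: nat \<Rightarrow> 'a::ab_group_add)"
  by (auto simp: puncture_vec_def fun_eq_iff)

lemma module_hom_puncture_vec: "module_hom scl scl (puncture_vec I X :: (nat \<Rightarrow> 'a::field) \<Rightarrow> _)"
  unfolding module_hom_iff_linear linear_iff
  by (auto simp: VS.vector_space_axioms puncture_vec_def scl_def fun_eq_iff)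

lemma puncture_vec_in_vecs: "puncture_vec I X c \<in> vecs (I - X)"
  by (auto simp: puncture_vec_def vecs_def)

lemma puncture_vec_id: "v \<in> vecs (I - X) \<Longrightarrow> puncture_vec I X v = v"
  by (auto simp: puncture_vec_def vecs_def fun_eq_iff)

lemma vecs_diff: "x \<in> vecs I \<Longrightarrow> y \<in> vecs I \<Longrightarrow> x - (y :: nat \<Rightarrow> 'a::ab_group_add) \<in> vecs I"
  by (auto simp: vecs_def)

lemma supp_subset_if_vecs: "v \<in> vecs I \<Longrightarrow> supp v \<subseteq> I"
  by (auto simp: supp_def vecs_def)

lemma wt_eq_sum: "v \<in> vecs I \<Longrightarrow> finite I \<Longrightarrow> wt v = (\<Sum>i\<in>I. of_bool (v i \<noteq> 0))"
  by (auto simp: wt_def sum_of_bool_eq supp_def vecs_def intro!: arg_cong[where f = card])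

lemma wt_le_card: "v \<in> vecs I \<Longrightarrow> finite I \<Longrightarrow> wt v \<le> card I"
  unfolding wt_def by (meson card_mono supp_subset_if_vecs)

lemma wt_zero [simp]: "wt (0 :: nat \<Rightarrow> 'a::zero) = 0"
  by (simp add: wt_def supp_def)

lemma wt_diff_le:
  assumes "x \<in> vecs I" "y \<in> vecs I" "finite I"
  shows "wt (x - (y :: nat \<Rightarrow> 'a::ab_group_add)) \<le> wt x + wt y"
proof -
  have "supp (x - y) \<subseteq> supp x \<union> supp y" by (auto simp: supp_def)
  moreover have "finite (supp x)" "finite (supp y)"
    using assms by (meson finite_subset supp_subset_if_vecs)+
  ultimately show ?thesis
    unfolding wt_def by (meson card_Un_le card_mono finite_UnI le_trans)
qed

lemma wt_le_wt_puncture_vec: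
  assumes "c \<in> vecs I" "finite I" "finite X"
  shows "wt c \<le> wt (puncture_vec I X c) + card X"
proof -
  have "supp c \<subseteq> supp (puncture_vec I X c) \<union> X"
    using assms(1) by (auto simp: supp_def puncture_vec_def vecs_def)
  moreover have "finite (supp (puncture_vec I X c))"
    using supp_subset_if_vecs[OF puncture_vec_in_vecs] assms(2) by (meson finite_Diff finite_subset)
  ultimately show ?thesis
    unfolding wt_def by (meson assms(3) card_Un_le card_mono finite_UnI le_trans)
qed

lemma wt_diff_le_puncture_vec:
  fixes x y :: "nat \<Rightarrow> 'a::ab_group_add"
  assumes "x \<in> vecs I" "y \<in> vecs I" "finite I" "finite X"
  shows "wt (x - y) \<le> wt (puncture_vec I X x) + wt (puncture_vec I X y) + card X"
proof -
  have "wt (x - y) \<le> wt (puncture_vec I X x - puncture_vec I X y) + card X"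
    using wt_le_wt_puncture_vec[OF vecs_diff[OF assms(1,2)] assms(3,4)] by (simp add: puncture_vec_diff)
  also have "\<dots> \<le> wt (puncture_vec I X x) + wt (puncture_vec I X y) + card X"
    using wt_diff_le[OF puncture_vec_in_vecs puncture_vec_in_vecs, of I X] assms(3) by simp
  finally show ?thesis .
qed

lemma neq_if_supp_disjoint: "supp u \<inter> supp v = {} \<Longrightarrow> u \<noteq> 0 \<Longrightarrow> u \<noteq> v"
  by (auto simp: supp_def fun_eq_iff)

lemma min_dist_le_wt:
  assumes "lin_code I C" "c \<in> C" "c \<noteq> 0"
  shows "min_dist I C \<le> wt c"
proof -
  let ?W = "{wt c |c. c \<in> C \<and> c \<noteq> 0}"
  have "?W \<subseteq> {..card I}"
    using assms(1) wt_le_card by (fastforce simp: lin_code_def)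
  then have "Min ?W \<le> wt c"
    using assms(2,3) by (intro Min_le) (auto intro: finite_subset)
  then show ?thesis using assms(2,3) by (auto simp: min_dist_def)
qed

lemma MDS_wt_gt: "is_MDS I C \<Longrightarrow> c \<in> C \<Longrightarrow> c \<noteq> 0 \<Longrightarrow> card I - code_dim C < wt c"
  using min_dist_le_wt by (fastforce simp: is_MDS_def)

lemma code_dim_puncture:
  assumes lc: "lin_code I (C :: (nat \<Rightarrow> 'a::field) set)" and "finite X"
    and wt_gt: "\<forall>c\<in>C. c \<noteq> 0 \<longrightarrow> card X < wt c"
  shows "code_dim (puncture_vec I X ` C) = code_dim C"
proof -
  let ?p = "puncture_vec I X"
  have sub: "VS.subspace C" and "finite I" "C \<subseteq> vecs I"
    using lc by (auto simp: lin_code_def)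
  have inj: "inj_on ?p C"
  proof (rule inj_onI)
    fix x y assume xy: "x \<in> C" "y \<in> C" "?p x = ?p y"
    then have "x - y \<in> C" using sub by (simp add: VS.subspace_diff)
    moreover have "wt (x - y) \<le> wt (?p (x - y)) + card X"
      using wt_le_wt_puncture_vec \<open>x - y \<in> C\<close> \<open>finite I\<close> \<open>finite X\<close> \<open>C \<subseteq> vecs I\<close> by blast
    ultimately show "x = y" using wt_gt xy(3) by (fastforce simp: puncture_vec_diff)
  qed
  obtain B where B: "B \<subseteq> C" "VS.independent B" "C \<subseteq> VS.span B" "card B = VS.dim C"
    using VS.basis_exists by blast
  have span_B: "VS.span B = C"
    using B(1,3) VS.span_minimal[OF B(1) sub] by blast
  have "VS.independent (?p ` B)"
    using module_hom.dependent_inj_imageD[OF module_hom_puncture_vec, of I X B] inj span_B B(2) by auto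
  moreover have "?p ` C \<subseteq> VS.span (?p ` B)"
    using module_hom.span_image[OF module_hom_puncture_vec, of I X B] span_B by simp
  ultimately have "card (?p ` B) = VS.dim (?p ` C)"
    using VS.basis_card_eq_dim[of "?p ` B" "?p ` C"] B(1) by blast
  moreover have "card (?p ` B) = card B"
    using card_image inj B(1) inj_on_subset by blast
  ultimately show ?thesis using B(4) by (simp add: code_dim_def)
qed

lemma min_dist_puncture_ge:
  assumes lc: "lin_code I (C :: (nat \<Rightarrow> 'a::field) set)" and "finite X"
    and wt_ge: "\<forall>c\<in>C. c \<noteq> 0 \<longrightarrow> m \<le> wt c"
  shows "min (m - card X) (card (I - X) + 1) \<le> min_dist (I - X) (puncture_vec I X ` C)"
proof (cases "puncture_vec I X ` C \<subseteq> {0}")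
  case True
  then show ?thesis by (simp add: min_dist_def)
next
  case False
  let ?W = "{wt c |c. c \<in> puncture_vec I X ` C \<and> c \<noteq> 0}"
  have "finite I" "C \<subseteq> vecs I" using lc by (auto simp: lin_code_def)
  have "?W \<subseteq> {..card (I - X)}"
    using wt_le_card[OF puncture_vec_in_vecs] \<open>finite I\<close> by auto
  then have "finite ?W" by (meson finite_atMost finite_subset)
  moreover have "?W \<noteq> {}" using False by auto
  moreover have "m - card X \<le> x" if "x \<in> ?W" for x
  proof -
    obtain c where c: "c \<in> C" "puncture_vec I X c \<noteq> 0" "x = wt (puncture_vec I X c)"
      using \<open>x \<in> ?W\<close> by auto
    then have "c \<noteq> 0" by (auto simp: puncture_vec_def)
    then have "m \<le> wt c" using wt_ge c(1) by blast
    moreover have "wt c \<le> x + card X"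
      using wt_le_wt_puncture_vec c \<open>finite I\<close> \<open>finite X\<close> \<open>C \<subseteq> vecs I\<close> by auto
    ultimately show ?thesis by linarith
  qed
  ultimately have "m - card X \<le> Min ?W" by simp
  then show ?thesis using False by (simp add: min_dist_def)
qed

definition two_MDS_violation ::
    "nat set \<Rightarrow> (nat \<Rightarrow> 'a::field) set \<Rightarrow> (nat \<Rightarrow> 'a) \<Rightarrow> (nat \<Rightarrow> 'a) \<Rightarrow> (nat \<Rightarrow> 'a) \<Rightarrow> bool" where
  "two_MDS_violation I C e0 e1 e2 \<longleftrightarrow> e0 \<in> vecs I \<and> e1 \<in> vecs I \<and> e2 \<in> vecs I \<and>
     e0 \<noteq> e1 \<and> e0 \<noteq> e2 \<and> e1 \<noteq> e2 \<and>
     e0 - e1 \<in> C \<and> e0 - e2 \<in> C \<and> e1 - e2 \<in> C \<and>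
     wt e0 + wt e1 + wt e2 \<le> 2 * (card I - code_dim C)"

definition lightly_two_MDS_violation ::
    "nat set \<Rightarrow> (nat \<Rightarrow> 'a::field) set \<Rightarrow> (nat \<Rightarrow> 'a) \<Rightarrow> (nat \<Rightarrow> 'a) \<Rightarrow> (nat \<Rightarrow> 'a) \<Rightarrow> bool" where
  "lightly_two_MDS_violation I C e0 e1 e2 \<longleftrightarrow> e0 \<in> vecs I \<and> e1 \<in> vecs I \<and> e2 \<in> vecs I \<and>
     e0 \<noteq> 0 \<and> e1 \<noteq> 0 \<and> e2 \<noteq> 0 \<and>
     wt e0 + 1 \<le> min_dist I C \<and> wt e1 + 1 \<le> min_dist I C \<and> wt e2 + 1 \<le> min_dist I C \<and>
     e0 - e1 \<in> C \<and> e0 - e2 \<in> C \<and> e1 - e2 \<in> C \<and>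
     supp e0 \<inter> supp e1 = {} \<and> supp e0 \<inter> supp e2 = {} \<and> supp e1 \<inter> supp e2 = {} \<and>
     wt e0 + wt e1 + wt e2 \<le> 2 * (card I - code_dim C)"

lemma two_MDS_iff_no_violation: "two_MDS I C \<longleftrightarrow> (\<nexists>e0 e1 e2. two_MDS_violation I C e0 e1 e2)"
  unfolding two_MDS_def two_MDS_violation_def by (rule refl)

lemma lightly_two_MDS_iff_no_violation:
  "lightly_two_MDS I C \<longleftrightarrow> (\<nexists>e0 e1 e2. lightly_two_MDS_violation I C e0 e1 e2)"
  unfolding lightly_two_MDS_def lightly_two_MDS_violation_def by (rule refl)

lemma lift_puncture_coset:
  fixes f0 f :: "nat \<Rightarrow> 'a::ab_group_add"
  assumes "C \<subseteq> vecs I" "finite I" "finite X"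
    and "f0 \<in> vecs (I - X)" "f0 - f \<in> puncture_vec I X ` C"
  obtains e where "e \<in> vecs I" "puncture_vec I X e = f" "f0 - e \<in> C" "wt e \<le> wt f + card X"
proof -
  from assms(5) obtain c where c: "f0 - f = puncture_vec I X c" "c \<in> C"
    by (rule imageE)
  have "f0 \<in> vecs I" using assms(4) by (auto simp: vecs_def)
  moreover have "c \<in> vecs I" using c(2) assms(1) by blast
  ultimately have e: "f0 - c \<in> vecs I" by (rule vecs_diff)
  have p: "puncture_vec I X (f0 - c) = f"
    unfolding puncture_vec_diff puncture_vec_id[OF assms(4)] c(1)[symmetric] by simp
  have "wt (f0 - c) \<le> wt f + card X"
    using wt_le_wt_puncture_vec[OF e assms(2,3)] unfolding p .
  moreover have "f0 - (f0 - c) \<in> C" using c(2) by simp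
  ultimately show thesis using that e p by blast
qed

lemma lightly_two_MDS_puncture_if_two_MDS:
  fixes C :: "(nat \<Rightarrow> 'a::field) set"
  assumes lc: "lin_code I C" and two: "two_MDS I C"
    and X: "X \<subseteq> I" "card X + code_dim C \<le> card I"
    and wt_gt: "\<forall>c\<in>C. c \<noteq> 0 \<longrightarrow> card X < wt c"
  shows "lightly_two_MDS (I - X) (puncture_vec I X ` C)"
  unfolding lightly_two_MDS_iff_no_violation
proof (intro notI, elim exE)
  let ?p = "puncture_vec I X"
  fix f0 f1 f2 assume "lightly_two_MDS_violation (I - X) (?p ` C) f0 f1 f2"
  then have f: "f0 \<in> vecs (I - X)" "f0 \<noteq> 0" "f1 \<noteq> 0"
    "f0 - f1 \<in> ?p ` C" "f0 - f2 \<in> ?p ` C"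
    "supp f0 \<inter> supp f1 = {}" "supp f0 \<inter> supp f2 = {}" "supp f1 \<inter> supp f2 = {}"
    and wt_f: "wt f0 + wt f1 + wt f2 \<le> 2 * (card (I - X) - code_dim (?p ` C))"
    unfolding lightly_two_MDS_violation_def by simp_all
  have "finite I" "C \<subseteq> vecs I" "VS.subspace C"
    using lc unfolding lin_code_def by simp_all
  have "finite X" using X(1) \<open>finite I\<close> by (rule finite_subset)
  obtain e1 where e1: "e1 \<in> vecs I" "?p e1 = f1" "f0 - e1 \<in> C" "wt e1 \<le> wt f1 + card X"
    by (rule lift_puncture_coset[OF \<open>C \<subseteq> vecs I\<close> \<open>finite I\<close> \<open>finite X\<close> f(1,4)])
  obtain e2 where e2: "e2 \<in> vecs I" "?p e2 = f2" "f0 - e2 \<in> C" "wt e2 \<le> wt f2 + card X"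
    by (rule lift_puncture_coset[OF \<open>C \<subseteq> vecs I\<close> \<open>finite I\<close> \<open>finite X\<close> f(1,5)])
  have "code_dim (?p ` C) = code_dim C"
    using code_dim_puncture[OF lc \<open>finite X\<close> wt_gt] .
  moreover have "card (I - X) = card I - card X"
    using X(1) \<open>finite X\<close> by (simp add: card_Diff_subset)
  ultimately have "wt f0 + wt e1 + wt e2 \<le> 2 * (card I - code_dim C)"
    using wt_f e1(4) e2(4) X(2) by simp
  moreover have "e1 - e2 \<in> C"
    using VS.subspace_diff[OF \<open>VS.subspace C\<close> e2(3) e1(3)] by simp
  moreover have "f0 \<noteq> e1" "f0 \<noteq> e2" "e1 \<noteq> e2"
    using neq_if_supp_disjoint[OF f(6,2)] neq_if_supp_disjoint[OF f(7,2)]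
      neq_if_supp_disjoint[OF f(8,3)] puncture_vec_id[OF f(1)] e1(2) e2(2) by metis+
  moreover have "f0 \<in> vecs I" using f(1) by (auto simp: vecs_def)
  ultimately have "two_MDS_violation I C f0 e1 e2"
    using e1(1,3) e2(1,3) unfolding two_MDS_violation_def by simp
  then show False using two unfolding two_MDS_iff_no_violation by blast
qed

definition nonzero_count :: "(nat \<Rightarrow> 'a::zero) \<Rightarrow> (nat \<Rightarrow> 'a) \<Rightarrow> (nat \<Rightarrow> 'a) \<Rightarrow> nat \<Rightarrow> nat" where
  "nonzero_count e0 e1 e2 j = of_bool (e0 j \<noteq> 0) + of_bool (e1 j \<noteq> 0) + of_bool (e2 j \<noteq> 0)"

definition supp_overlap :: "(nat \<Rightarrow> 'a::zero) \<Rightarrow> (nat \<Rightarrow> 'a) \<Rightarrow> (nat \<Rightarrow> 'a) \<Rightarrow> nat set" where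
  "supp_overlap e0 e1 e2 = {j. 2 \<le> nonzero_count e0 e1 e2 j}"

definition supp_single :: "(nat \<Rightarrow> 'a::zero) \<Rightarrow> (nat \<Rightarrow> 'a) \<Rightarrow> (nat \<Rightarrow> 'a) \<Rightarrow> nat set" where
  "supp_single e0 e1 e2 = {j. nonzero_count e0 e1 e2 j = 1}"

lemma nonzero_count_bounds:
  fixes x y z :: "'a::zero"
  defines "m \<equiv> of_bool (x \<noteq> 0) + of_bool (y \<noteq> 0) + of_bool (z \<noteq> 0) :: nat"
  shows "of_bool (x \<noteq> y) + of_bool (x \<noteq> z) + of_bool (y \<noteq> z)
           \<le> 3 * of_bool (2 \<le> m) + 2 * (of_bool (m = 1) :: nat)"
    and "of_bool (x \<noteq> y) \<le> of_bool (2 \<le> m) + (of_bool (m = 1) :: nat)"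
    and "2 * of_bool (2 \<le> m) + of_bool (m = 1) \<le> m"
  unfolding m_def
  by (cases "x = 0"; cases "y = 0"; cases "z = 0"; cases "x = y"; cases "x = z"; cases "y = z"; simp)+

lemma supp_overlap_single_subset:
  assumes "e0 \<in> vecs I" "e1 \<in> vecs I" "e2 \<in> vecs I"
  shows "supp_overlap e0 e1 e2 \<subseteq> I" "supp_single e0 e1 e2 \<subseteq> I"
  using assms by (auto simp: supp_overlap_def supp_single_def nonzero_count_def vecs_def)

lemma triple_weight_bounds:
  fixes e0 e1 e2 :: "nat \<Rightarrow> 'a::ab_group_add"
  assumes e: "e0 \<in> vecs I" "e1 \<in> vecs I" "e2 \<in> vecs I" and "finite I"
  defines "t2 \<equiv> card (supp_overlap e0 e1 e2)" and "t1 \<equiv> card (supp_single e0 e1 e2)"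
  shows "2 * t2 + t1 \<le> wt e0 + wt e1 + wt e2"
    and "wt (e0 - e1) + wt (e0 - e2) + wt (e1 - e2) \<le> 3 * t2 + 2 * t1"
    and "wt (e0 - e1) \<le> t2 + t1"
    and "t2 + t1 \<le> card I"
proof -
  let ?m = "nonzero_count e0 e1 e2"
  have t2: "(\<Sum>j\<in>I. of_bool (2 \<le> ?m j)) = t2"
    using supp_overlap_single_subset(1)[OF e]
    using \<open>finite I\<close> by (simp add: t2_def sum_of_bool_eq supp_overlap_def Int_absorb1)
  have t1: "(\<Sum>j\<in>I. of_bool (?m j = 1)) = t1"
    using supp_overlap_single_subset(2)[OF e]
    using \<open>finite I\<close> by (simp add: t1_def sum_of_bool_eq supp_single_def Int_absorb1)
  have wt_diff: "wt (x - y) = (\<Sum>j\<in>I. of_bool (x j \<noteq> y j))" if "x \<in> vecs I" "y \<in> vecs I" for x y :: "nat \<Rightarrow> 'a"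
    using wt_eq_sum[OF vecs_diff[OF that] \<open>finite I\<close>] by simp
  have "wt e0 + wt e1 + wt e2 = (\<Sum>j\<in>I. ?m j)"
    using wt_eq_sum[OF e(1) \<open>finite I\<close>] wt_eq_sum[OF e(2) \<open>finite I\<close>] wt_eq_sum[OF e(3) \<open>finite I\<close>]
    by (simp add: nonzero_count_def sum.distrib)
  also have "(\<Sum>j\<in>I. 2 * of_bool (2 \<le> ?m j) + of_bool (?m j = 1)) \<le> \<dots>"
    by (rule sum_mono) (simp only: nonzero_count_def nonzero_count_bounds(3))
  finally show "2 * t2 + t1 \<le> wt e0 + wt e1 + wt e2"
    using t1 t2 by (simp add: sum.distrib sum_distrib_left[symmetric])
  have "(\<Sum>j\<in>I. of_bool (e0 j \<noteq> e1 j) + of_bool (e0 j \<noteq> e2 j) + of_bool (e1 j \<noteq> e2 j))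
     \<le> (\<Sum>j\<in>I. 3 * of_bool (2 \<le> ?m j) + 2 * (of_bool (?m j = 1) :: nat))"
    by (rule sum_mono) (simp only: nonzero_count_def nonzero_count_bounds(1))
  then show "wt (e0 - e1) + wt (e0 - e2) + wt (e1 - e2) \<le> 3 * t2 + 2 * t1"
    using wt_diff[OF e(1,2)] wt_diff[OF e(1,3)] wt_diff[OF e(2,3)] t1 t2
    by (simp add: sum.distrib sum_distrib_left[symmetric])
  have "(\<Sum>j\<in>I. of_bool (e0 j \<noteq> e1 j)) \<le> (\<Sum>j\<in>I. of_bool (2 \<le> ?m j) + (of_bool (?m j = 1) :: nat))"
    by (rule sum_mono) (simp only: nonzero_count_def nonzero_count_bounds(2))
  then show "wt (e0 - e1) \<le> t2 + t1"
    using wt_diff[OF e(1,2)] t1 t2 by (simp add: sum.distrib)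
  have "(\<Sum>j\<in>I. of_bool (2 \<le> ?m j) + (of_bool (?m j = 1) :: nat)) \<le> (\<Sum>j\<in>I. 1)"
    by (rule sum_mono) simp
  then show "t2 + t1 \<le> card I"
    using t1 t2 by (simp add: sum.distrib)
qed

lemma supp_puncture_vec_disjoint:
  assumes "supp_overlap e0 e1 e2 \<subseteq> X"
  shows "supp (puncture_vec I X e0) \<inter> supp (puncture_vec I X e1) = {}"
    and "supp (puncture_vec I X e0) \<inter> supp (puncture_vec I X e2) = {}"
    and "supp (puncture_vec I X e1) \<inter> supp (puncture_vec I X e2) = {}"
  using assms by (auto simp: supp_overlap_def nonzero_count_def supp_def puncture_vec_def)

lemma wt_puncture_vec_triple:
  assumes e: "e0 \<in> vecs I" "e1 \<in> vecs I" "e2 \<in> vecs I" and "finite I"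
    and "supp_overlap e0 e1 e2 \<subseteq> X"
  shows "wt (puncture_vec I X e0) + wt (puncture_vec I X e1) + wt (puncture_vec I X e2)
           = card (supp_single e0 e1 e2 - X)"
proof -
  let ?m = "nonzero_count e0 e1 e2"
  have wt_p: "wt (puncture_vec I X e) = (\<Sum>j\<in>I - X. of_bool (e j \<noteq> 0))" for e
  proof -
    have "wt (puncture_vec I X e) = (\<Sum>j\<in>I - X. of_bool (puncture_vec I X e j \<noteq> 0))"
      using \<open>finite I\<close> by (intro wt_eq_sum puncture_vec_in_vecs) simp
    then show ?thesis by (simp add: puncture_vec_def)
  qed
  have "wt (puncture_vec I X e0) + wt (puncture_vec I X e1) + wt (puncture_vec I X e2)
      = (\<Sum>j\<in>I - X. ?m j)"
    unfolding wt_p by (simp add: nonzero_count_def sum.distrib)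
  also have "\<dots> = (\<Sum>j\<in>I - X. of_bool (j \<in> supp_single e0 e1 e2))"
  proof (rule sum.cong)
    fix j assume "j \<in> I - X"
    then have "j \<notin> supp_overlap e0 e1 e2" using assms(5) by blast
    then have "?m j < 2" by (simp add: supp_overlap_def)
    then show "?m j = of_bool (j \<in> supp_single e0 e1 e2)" by (auto simp: supp_single_def)
  qed simp
  also have "\<dots> = card ((I - X) \<inter> supp_single e0 e1 e2)"
    using \<open>finite I\<close> by (simp add: sum_of_bool_eq)
  also have "(I - X) \<inter> supp_single e0 e1 e2 = supp_single e0 e1 e2 - X"
    using supp_overlap_single_subset(2)[OF e] by blast
  finally show ?thesis .
qed

lemma lightly_two_MDS_violation_puncture:
  fixes C :: "(nat \<Rightarrow> 'a::field) set"
  assumes lc: "lin_code I C" and wt_gt: "\<forall>c\<in>C. c \<noteq> 0 \<longrightarrow> card I - code_dim C < wt c"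
    and e: "two_MDS_violation I C e0 e1 e2"
    and X: "X \<subseteq> I" "supp_overlap e0 e1 e2 \<subseteq> X" "card X \<le> card I - code_dim C"
    and wt_sum: "wt (puncture_vec I X e0) + wt (puncture_vec I X e1) + wt (puncture_vec I X e2)
                   \<le> 2 * (card (I - X) - code_dim C)"
  shows "lightly_two_MDS_violation (I - X) (puncture_vec I X ` C)
           (puncture_vec I X e0) (puncture_vec I X e1) (puncture_vec I X e2)"
proof -
  let ?p = "puncture_vec I X"
  define D where "D = card I - code_dim C"
  have "finite I" using lc by (simp add: lin_code_def)
  have "finite X" using X(1) \<open>finite I\<close> by (rule finite_subset)
  have cX: "card (I - X) = card I - card X"
    using X(1) \<open>finite X\<close> by (simp add: card_Diff_subset)
  have ev: "e0 \<in> vecs I" "e1 \<in> vecs I" "e2 \<in> vecs I"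
    and ed: "e0 - e1 \<in> C" "e0 - e2 \<in> C" "e1 - e2 \<in> C" "e0 \<noteq> e1" "e0 \<noteq> e2" "e1 \<noteq> e2"
    using e unfolding two_MDS_violation_def by simp_all
  have dim: "code_dim (?p ` C) = code_dim C"
    using code_dim_puncture[OF lc \<open>finite X\<close>] wt_gt X(3) by fastforce
  have pair: "D < wt (?p x) + wt (?p y) + card X"
    if "x - y \<in> C" "x \<noteq> y" "x \<in> vecs I" "y \<in> vecs I" for x y
  proof -
    have "D < wt (x - y)" using wt_gt that(1,2) by (simp add: D_def)
    then show ?thesis using wt_diff_le_puncture_vec[OF that(3,4) \<open>finite I\<close> \<open>finite X\<close>] by linarith
  qed
  \<comment> \<open>Each pair is at distance > D before puncturing, so the third vector carries little weight.\<close>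
  note pairs = pair[OF ed(1,4) ev(1,2)] pair[OF ed(2,5) ev(1,3)] pair[OF ed(3,6) ev(2,3)]
  have "wt (?p e0) + 1 + card X \<le> D" "wt (?p e1) + 1 + card X \<le> D" "wt (?p e2) + 1 + card X \<le> D"
    "1 \<le> wt (?p e0)" "1 \<le> wt (?p e1)" "1 \<le> wt (?p e2)"
    using pairs wt_sum X(3) cX unfolding D_def by linarith+
  then have light: "wt (?p e) + 1 + card X \<le> D" "1 \<le> wt (?p e)" if "e \<in> {e0, e1, e2}" for e
    using that by auto
  have "min (D + 1 - card X) (card (I - X) + 1) \<le> min_dist (I - X) (?p ` C)"
    using min_dist_puncture_ge[OF lc \<open>finite X\<close>, of "D + 1"] wt_gt by (simp add: D_def Suc_le_eq)
  moreover have wt_le: "wt (?p e) \<le> card (I - X)" for e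
    using \<open>finite I\<close> by (intro wt_le_card puncture_vec_in_vecs finite_Diff)
  ultimately have md: "wt (?p e) + 1 \<le> min_dist (I - X) (?p ` C)" if "e \<in> {e0, e1, e2}" for e
    using light[OF that] wt_le[of e] by (simp add: min_def split: if_splits)
  have nz: "?p e \<noteq> 0" if "e \<in> {e0, e1, e2}" for e
    using light(2)[OF that] by (metis wt_zero not_one_le_zero)
  have "?p x - ?p y \<in> ?p ` C" if "x - y \<in> C" for x y
    using that by (metis image_eqI puncture_vec_diff)
  then show ?thesis
    unfolding lightly_two_MDS_violation_def
    using nz md ed(1-3) supp_puncture_vec_disjoint[OF X(2)] wt_sum dim
    by (simp add: puncture_vec_in_vecs)
qed

lemma two_MDS_if_punctures_lightly_two_MDS:
  fixes C :: "(nat \<Rightarrow> 'a::field) set"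
  assumes lc: "lin_code I C" and wt_gt: "\<forall>c\<in>C. c \<noteq> 0 \<longrightarrow> card I - code_dim C < wt c"
    and punct: "\<And>X. X \<subseteq> I \<Longrightarrow> max 0 (int (card I) - 2 * int (code_dim C)) \<le> int (card X) \<Longrightarrow>
                  int (card X) \<le> int (card I) - int (code_dim C) - 3 \<Longrightarrow>
                  lightly_two_MDS (I - X) (puncture_vec I X ` C)"
  shows "two_MDS I C"
  unfolding two_MDS_iff_no_violation
proof (intro notI, elim exE)
  fix e0 e1 e2 assume e: "two_MDS_violation I C e0 e1 e2"
  define n k where "n = card I" and "k = code_dim C"
  define T2 T1 where "T2 = supp_overlap e0 e1 e2" and "T1 = supp_single e0 e1 e2"
  have "finite I" using lc by (simp add: lin_code_def)
  have ev: "e0 \<in> vecs I" "e1 \<in> vecs I" "e2 \<in> vecs I"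
    and ed: "e0 - e1 \<in> C" "e0 - e2 \<in> C" "e1 - e2 \<in> C" "e0 \<noteq> e1" "e0 \<noteq> e2" "e1 \<noteq> e2"
    and wt_e: "wt e0 + wt e1 + wt e2 \<le> 2 * (n - k)"
    using e unfolding two_MDS_violation_def n_def k_def by simp_all
  note tb = triple_weight_bounds[OF ev \<open>finite I\<close>, folded T2_def T1_def]
  have "n - k < wt (e0 - e1)" "n - k < wt (e0 - e2)" "n - k < wt (e1 - e2)"
    using wt_gt ed unfolding n_def k_def by auto
  then have t2_le: "card T2 + 3 \<le> n - k" and "3 \<le> k" and "k \<le> n"
    using tb wt_e unfolding n_def by linarith+
  define z where "z = n - 2 * k - card T2"
  have "z \<le> card T1" using tb(3) \<open>n - k < wt (e0 - e1)\<close> unfolding z_def by linarith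
  then obtain Y where Y: "Y \<subseteq> T1" "card Y = z"
    by (meson obtain_subset_with_card_n)
  \<comment> \<open>Y tops the overlap coordinates up to n - 2k; if t2 already exceeds it, z = 0.\<close>
  define X where "X = T2 \<union> Y"
  have T: "T2 \<subseteq> I" "T1 \<subseteq> I" "T1 \<inter> T2 = {}"
    using supp_overlap_single_subset[OF ev] unfolding T1_def T2_def
    by (auto simp: supp_overlap_def supp_single_def)
  have "finite T2" using T(1) \<open>finite I\<close> by (rule finite_subset)
  have "finite Y" using Y(1) T(2) \<open>finite I\<close> by (meson finite_subset)
  have "X \<subseteq> I" using T Y(1) unfolding X_def by blast
  have cX: "card X = card T2 + z"
    using card_Un_disjoint[OF \<open>finite T2\<close> \<open>finite Y\<close>] Y T(3) unfolding X_def by auto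
  have "T1 - X = T1 - Y" using T(3) unfolding X_def by blast
  then have "card (T1 - X) = card T1 - z"
    using card_Diff_subset[OF \<open>finite Y\<close> Y(1)] Y(2) by simp
  then have wt_p: "wt (puncture_vec I X e0) + wt (puncture_vec I X e1) + wt (puncture_vec I X e2)
      = card T1 - z"
    using wt_puncture_vec_triple[OF ev \<open>finite I\<close>, of X] unfolding X_def T1_def T2_def by simp
  have "card (I - X) = n - card X"
    using card_Diff_subset[OF finite_subset[OF \<open>X \<subseteq> I\<close> \<open>finite I\<close>] \<open>X \<subseteq> I\<close>]
    unfolding n_def .
  moreover have "card T1 - z \<le> 2 * (n - card X - k)"
    using tb(1,4) wt_e cX unfolding z_def n_def by linarith
  ultimately have wt_p_le: "wt (puncture_vec I X e0) + wt (puncture_vec I X e1) + wt (puncture_vec I X e2)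
      \<le> 2 * (card (I - X) - code_dim C)"
    using wt_p unfolding k_def by simp
  have "supp_overlap e0 e1 e2 \<subseteq> X" unfolding X_def T2_def by blast
  moreover have "card X \<le> card I - code_dim C"
    using cX t2_le unfolding z_def n_def k_def by linarith
  ultimately have "lightly_two_MDS_violation (I - X) (puncture_vec I X ` C)
      (puncture_vec I X e0) (puncture_vec I X e1) (puncture_vec I X e2)"
    by (rule lightly_two_MDS_violation_puncture[OF lc wt_gt e \<open>X \<subseteq> I\<close> _ _ wt_p_le])
  moreover have "lightly_two_MDS (I - X) (puncture_vec I X ` C)"
    using punct[OF \<open>X \<subseteq> I\<close>] cX t2_le \<open>3 \<le> k\<close> unfolding z_def n_def k_def by simp
  ultimately show False unfolding lightly_two_MDS_iff_no_violation by blast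
qed

theorem mainTheorem15:
  fixes C :: "(nat \<Rightarrow> 'a::{field,finite}) set" and n k :: nat
  assumes "lin_code {0..<n} C" and "code_dim C = k" and "is_MDS {0..<n} C"
  shows "two_MDS {0..<n} C \<longleftrightarrow>
    (\<forall>w::nat. \<forall>X. max 0 (int n - 2 * int k) \<le> int w \<longrightarrow> int w \<le> int n - int k - 3 \<longrightarrow>
        X \<subseteq> {0..<n} \<longrightarrow> card X = w \<longrightarrow>
        lightly_two_MDS ({0..<n} - X) (puncture {0..<n} X C))"
proof -
  have wt_gt: "\<forall>c\<in>C. c \<noteq> 0 \<longrightarrow> card {0..<n} - code_dim C < wt c"
    using MDS_wt_gt[OF assms(3)] by blast
  show ?thesis
    unfolding puncture_eq_image
  proof (intro iffI allI impI)
    fix w :: nat and X :: "nat set"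
    assume "two_MDS {0..<n} C" and "int w \<le> int n - int k - 3" "X \<subseteq> {0..<n}" "card X = w"
    moreover from this have "\<forall>c\<in>C. c \<noteq> 0 \<longrightarrow> card X < wt c"
      using wt_gt assms(2) by fastforce
    ultimately show "lightly_two_MDS ({0..<n} - X) (puncture_vec {0..<n} X ` C)"
      using lightly_two_MDS_puncture_if_two_MDS[OF assms(1)] assms(2) by simp
  next
    assume "\<forall>w X. max 0 (int n - 2 * int k) \<le> int w \<longrightarrow> int w \<le> int n - int k - 3 \<longrightarrow>
        X \<subseteq> {0..<n} \<longrightarrow> card X = w \<longrightarrow> lightly_two_MDS ({0..<n} - X) (puncture_vec {0..<n} X ` C)"
    then show "two_MDS {0..<n} C"
      using two_MDS_if_punctures_lightly_two_MDS[OF assms(1) wt_gt] assms(2) by simp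
  qed
qed

end
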